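(* During every execution of the algorithm, at least one active candidate exists.
   Context: A broadcast network is modeled as a connected graph G(V,E) with n nodes. In the fragment-level leader election algorithm, nodes are partitioned into fragments, each consisting of an active candidate and its supporting nodes; id(F) = (size, candidate identity) ordered lexicographically (by size, then by identity); external edges are directed from the larger-id to the smaller-id fragment. Initially each node is an active candidate of a size-1 fragment in state wait. A fragment with an outgoing edge is in wait; one whose external edges are all incoming enters work, counts its size new_size, and compares with its maximal neighbor F': if new_size > X · size(F') (X > 1) it remains active, updates its size, makes all external edges outgoing and returns to wait; otherwise its candidate becomes inactive and the fragment joins F'. A fragment with no external edges is in state leader. A candidate is active while its fragment is in state work, wait or leader. *)

theory Defs
  imports Complex_Main
begin

(* States of a candidate (the candidate of a fragment carries its fragment's state). *)
datatype cstate = Wait | Work | Leader | Inactive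

(* Global configuration:
   cand v : the candidate of the fragment containing node v
   sz c   : the size recorded by candidate c (size(F) in id(F))
   st c   : the state of candidate c *)
record 'v conf =
  cand :: "'v \<Rightarrow> 'v"
  sz   :: "'v \<Rightarrow> nat"
  st   :: "'v \<Rightarrow> cstate"

definition connected_graph :: "'v set \<Rightarrow> ('v \<times> 'v) set \<Rightarrow> bool" where
  "connected_graph V E \<longleftrightarrow> (\<forall>u\<in>V. \<forall>w\<in>V. (u, w) \<in> E\<^sup>*)"

definition frag :: "'v set \<Rightarrow> ('v, 'b) conf_scheme \<Rightarrow> 'v \<Rightarrow> 'v set" where
  "frag V s c = {v \<in> V. cand s v = c}"

(* id(F) = (size, candidate identity), compared lexicographically *)
definition fid_less :: "('v::linorder, 'b) conf_scheme \<Rightarrow> 'v \<Rightarrow> 'v \<Rightarrow> bool" where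
  "fid_less s c d \<longleftrightarrow> sz s c < sz s d \<or> (sz s c = sz s d \<and> c < d)"

definition nbrs :: "('v \<times> 'v) set \<Rightarrow> ('v, 'b) conf_scheme \<Rightarrow> 'v \<Rightarrow> 'v set" where
  "nbrs E s c = {cand s w | u w. (u, w) \<in> E \<and> cand s u = c \<and> cand s w \<noteq> c}"

definition init_conf :: "'v set \<Rightarrow> 'v conf \<Rightarrow> bool" where
  "init_conf V s \<longleftrightarrow> (\<forall>v\<in>V. cand s v = v \<and> sz s v = 1 \<and> st s v = Wait)"

definition active :: "'v set \<Rightarrow> 'v conf \<Rightarrow> 'v \<Rightarrow> bool" where
  "active V s c \<longleftrightarrow> c \<in> V \<and> cand s c = c \<and> st s c \<in> {Work, Wait, Leader}"

(* External edges point from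
   the larger-id fragment to the smaller-id one, so a fragment has all external
   edges incoming iff all its neighbouring fragments have larger id. *)
inductive step :: "real \<Rightarrow> 'v set \<Rightarrow> ('v \<times> 'v) set \<Rightarrow> ('v::linorder) conf \<Rightarrow> 'v conf \<Rightarrow> bool"
  for X V E where
  to_work:
    "\<lbrakk> c \<in> V; cand s c = c; st s c = Wait; nbrs E s c \<noteq> {};
       \<forall>d\<in>nbrs E s c. fid_less s c d \<rbrakk>
     \<Longrightarrow> step X V E s (s\<lparr>st := (st s)(c := Work)\<rparr>)"
| work_stay:
    "\<lbrakk> c \<in> V; cand s c = c; st s c = Work; d \<in> nbrs E s c;
       \<forall>d'\<in>nbrs E s c. \<not> fid_less s d d';
       real (card (frag V s c)) > X * real (sz s d) \<rbrakk>
     \<Longrightarrow> step X V E s (s\<lparr>sz := (sz s)(c := card (frag V s c)), st := (st s)(c := Wait)\<rparr>)"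
| work_join:
    "\<lbrakk> c \<in> V; cand s c = c; st s c = Work; d \<in> nbrs E s c;
       \<forall>d'\<in>nbrs E s c. \<not> fid_less s d d';
       \<not> (real (card (frag V s c)) > X * real (sz s d)) \<rbrakk>
     \<Longrightarrow> step X V E s (s\<lparr>cand := (\<lambda>v. if cand s v = c then d else cand s v),
                           st := (st s)(c := Inactive)\<rparr>)"
| to_leader:
    "\<lbrakk> c \<in> V; cand s c = c; st s c \<in> {Wait, Work}; nbrs E s c = {} \<rbrakk>
     \<Longrightarrow> step X V E s (s\<lparr>st := (st s)(c := Leader)\<rparr>)"

end

theory Submission
  imports Defs
begin

text \<open>Invariant: the candidate of every node is active. Initially each node is its own
  active candidate. Only a join makes a candidate inactive, and it hands the whole fragment
  to the candidate of a neighbouring fragment, which is active by the invariant because it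
  is the candidate of some node. Since V is nonempty, an active candidate exists.\<close>

definition all_candidates_active :: "'v set \<Rightarrow> 'v conf \<Rightarrow> bool" where
  "all_candidates_active V s \<longleftrightarrow> (\<forall>v\<in>V. active V s (cand s v))"

lemma nbrs_subset_cand_image:
  assumes "E \<subseteq> V \<times> V"
  shows "nbrs E s c \<subseteq> cand s ` V - {c}"
  using assms unfolding nbrs_def by blast

lemma init_conf_all_candidates_active:
  "init_conf V s \<Longrightarrow> all_candidates_active V s"
  unfolding init_conf_def all_candidates_active_def active_def by simp

lemma step_preserves_all_candidates_active:
  assumes "step X V E s t" and "all_candidates_active V s" and "E \<subseteq> V \<times> V"
  shows "all_candidates_active V t"
  using assms(1)
proof cases
  case (work_join c d)
  have "d \<in> cand s ` V - {c}"
    using nbrs_subset_cand_image[OF assms(3)] \<open>d \<in> nbrs E s c\<close> by blast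
  then have "active V s d" and "d \<noteq> c"
    using assms(2) unfolding all_candidates_active_def by auto
  with work_join assms(2) show ?thesis
    unfolding all_candidates_active_def active_def by auto
qed (use assms(2) in \<open>auto simp: all_candidates_active_def active_def\<close>)

lemma steps_preserve_all_candidates_active:
  assumes "(step X V E)\<^sup>*\<^sup>* s t" and "all_candidates_active V s" and "E \<subseteq> V \<times> V"
  shows "all_candidates_active V t"
  using assms(1,2)
  by (induction rule: rtranclp_induct) (auto intro: step_preserves_all_candidates_active[OF _ _ assms(3)])

theorem lemma1:
  fixes V :: "('v::linorder) set" and E :: "('v \<times> 'v) set" and X :: real
    and s0 s :: "'v conf"
  assumes "finite V" and "V \<noteq> {}" and "E \<subseteq> V \<times> V" and "sym E"
    and "connected_graph V E" and "X > 1"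
    and "init_conf V s0"
    and "(step X V E)\<^sup>*\<^sup>* s0 s"
  shows "\<exists>c. active V s c"
proof -
  have "all_candidates_active V s"
    using steps_preserve_all_candidates_active assms(8,3)
      init_conf_all_candidates_active[OF assms(7)] by blast
  moreover obtain v where "v \<in> V"
    using assms(2) by blast
  ultimately show ?thesis
    unfolding all_candidates_active_def by blast
qed

end
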